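(* Let $\mathscr{N}$, $\mathscr{E}$ be closed smooth Riemannian manifolds, $\Pi\colon\mathscr{E}\to\mathscr{N}$ a smooth double covering, and $\Phi\colon\mathscr{E}\to\mathscr{E}$ the map sending $z$ to the unique $y\neq z$ with $\Pi(y)=\Pi(z)$. There exists a Lipschitz function $\Xi\colon\mathscr{E}\times\mathscr{E}\to\mathbb{R}$ such that for all $z_1,z_2\in\mathscr{E}$: $\Xi(z_1,z_2)=1$ if and only if $z_1=z_2$; $\Xi(z_1,z_2)=-1$ if and only if $z_1=\Phi(z_2)$; and $\Xi(z_1,z_2)=\Xi(\Phi(z_1),\Phi(z_2))$.
   Context: A smooth map $\Pi\colon\mathscr{E}\to\mathscr{N}$ is a double covering if every $w\in\mathscr{N}$ has an open neighbourhood $V$ with $\Pi^{-1}(V)=U_1\cup U_2$, $U_1,U_2$ disjoint open sets on which $\Pi$ restricts to isometric diffeomorphisms onto $V$. Then $\Phi$ is a well-defined isometric involutive diffeomorphism. *)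

theory Defs
  imports "HOL-Analysis.Analysis"
begin

text \<open>A map between metric spaces restricted to an open set U is an
 isometric diffeomorphism onto V: here rendered (no smooth structure available)
 as a homeomorphism from U onto V that is a local isometry (locally distance
 preserving), which is what a Riemannian isometry between open sets gives for
 the induced distance functions.\<close>
definition isometric_onto :: "('a::metric_space \<Rightarrow> 'b::metric_space) \<Rightarrow> 'a set \<Rightarrow> 'b set \<Rightarrow> bool" where
  "isometric_onto f U V \<longleftrightarrow>
     (\<exists>g. homeomorphism U V f g) \<and>
     (\<forall>x\<in>U. \<exists>e>0. \<forall>y\<in>ball x e \<inter> U. \<forall>z\<in>ball x e \<inter> U. dist (f y) (f z) = dist y z)"

definition double_covering :: "('a::metric_space \<Rightarrow> 'b::metric_space) \<Rightarrow> bool" where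
  "double_covering P \<longleftrightarrow>
     (\<forall>w. \<exists>V. open V \<and> w \<in> V \<and>
        (\<exists>U1 U2. open U1 \<and> open U2 \<and> U1 \<inter> U2 = {} \<and> P -` V = U1 \<union> U2 \<and>
                 isometric_onto P U1 V \<and> isometric_onto P U2 V))"

end

theory Submission
  imports Defs
begin

text \<open>Since \<open>\<Pi>\<close> is a double covering, \<open>\<Phi>\<close> is an involution that locally swaps the two sheets
  isometrically. By compactness of \<open>\<E>\<close> a Lebesgue number \<open>d > 0\<close> makes this uniform: points
  \<open>z\<close> and \<open>\<Phi> z\<close> are at distance at least \<open>d\<close>, and \<open>\<Phi>\<close> preserves distances below \<open>d\<close>. With
  the bump \<open>b(t) = max 0 (1 - t/d)\<close>, the function
  \<open>\<Xi>(z\<^sub>1, z\<^sub>2) = b(dist z\<^sub>1 z\<^sub>2) - b(dist z\<^sub>1 (\<Phi> z\<^sub>2))\<close> has at most one nonzero term, equals \<open>\<plusminus>1\<close>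
  exactly on the diagonal and on the graph of \<open>\<Phi>\<close>, is \<open>\<Phi>\<close>-invariant, and is Lipschitz
  because it is bounded and Lipschitz at scales below \<open>d\<close>.\<close>

lemma abs_dist_diff_le_dist_add:
  fixes a b c d :: "'a::metric_space"
  shows "\<bar>dist a b - dist c d\<bar> \<le> dist a c + dist b d"
  by metric

lemma bounded_local_lipschitz_imp_lipschitz:
  fixes f :: "'a::metric_space \<Rightarrow> 'b::real_normed_vector"
  assumes "d > 0" and "L \<ge> 0"
    and bounded: "\<And>x. x \<in> S \<Longrightarrow> norm (f x) \<le> B"
    and local_lip: "\<And>x y. x \<in> S \<Longrightarrow> y \<in> S \<Longrightarrow> dist x y < d \<Longrightarrow> dist (f x) (f y) \<le> L * dist x y"
  shows "(max L (2 * B / d))-lipschitz_on S f"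
proof (rule lipschitz_onI)
  fix x y assume xy: "x \<in> S" "y \<in> S"
  show "dist (f x) (f y) \<le> max L (2 * B / d) * dist x y"
  proof (cases "dist x y < d")
    case True
    then have "dist (f x) (f y) \<le> L * dist x y" using local_lip xy by blast
    also have "\<dots> \<le> max L (2 * B / d) * dist x y" by (simp add: mult_right_mono)
    finally show ?thesis .
  next
    case False
    have "dist (f x) (f y) \<le> 2 * B"
      using norm_triangle_ineq4[of "f x" "f y"] bounded[OF xy(1)] bounded[OF xy(2)]
      unfolding dist_norm by linarith
    also have "\<dots> = 2 * B / d * d" using \<open>d > 0\<close> by simp
    also have "\<dots> \<le> max L (2 * B / d) * dist x y"
      using False \<open>d > 0\<close> \<open>L \<ge> 0\<close> bounded[OF xy(1)] by (intro mult_mono) auto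
    finally show ?thesis .
  qed
qed (use \<open>L \<ge> 0\<close> in simp)

definition bump :: "real \<Rightarrow> real \<Rightarrow> real" where
  "bump d t = max 0 (1 - t / d)"

lemma bump_bounds:
  assumes "d > 0" "t \<ge> 0"
  shows "0 \<le> bump d t" "bump d t \<le> 1"
  using assms by (auto simp: bump_def)

lemma bump_eq_1_iff:
  assumes "d > 0" "t \<ge> 0"
  shows "bump d t = 1 \<longleftrightarrow> t = 0"
  using assms by (auto simp: bump_def max_def)

lemma bump_eq_0:
  assumes "d > 0" "d \<le> t"
  shows "bump d t = 0"
  using assms by (simp add: bump_def)

lemma bump_lipschitz:
  assumes "d > 0"
  shows "\<bar>bump d s - bump d t\<bar> \<le> \<bar>s - t\<bar> / d"
proof -
  have "\<bar>(1 - s / d) - (1 - t / d)\<bar> = \<bar>s - t\<bar> / d"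
    using assms by (simp add: diff_divide_distrib[symmetric] abs_minus_commute)
  then show ?thesis unfolding bump_def by linarith
qed

locale uniform_swap =
  fixes Phi :: "'a::metric_space \<Rightarrow> 'a" and d :: real
  assumes d_pos: "d > 0"
    and involution: "\<And>z. Phi (Phi z) = z"
    and dist_swap_ge: "\<And>z. d \<le> dist z (Phi z)"
    and dist_swap_eq: "\<And>y z. dist y z < d \<Longrightarrow> dist (Phi y) (Phi z) = dist y z"
begin

definition sheet_sign :: "'a \<times> 'a \<Rightarrow> real" where
  "sheet_sign p = bump d (dist (fst p) (snd p)) - bump d (dist (fst p) (Phi (snd p)))"

lemma bump_dist_swap: "bump d (dist (Phi y) (Phi z)) = bump d (dist y z)"
proof (cases "dist y z < d")
  case True
  then show ?thesis using dist_swap_eq by simp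
next
  case False
  then have "\<not> dist (Phi y) (Phi z) < d" using dist_swap_eq[of "Phi y" "Phi z"] involution by metis
  then show ?thesis using False bump_eq_0[OF d_pos] by simp
qed

lemma sheet_sign_swap: "sheet_sign (Phi z1, Phi z2) = sheet_sign (z1, z2)"
  unfolding sheet_sign_def using bump_dist_swap[of z1 z2] bump_dist_swap[of z1 "Phi z2"] involution
  by simp

lemma sheet_sign_eq_1_iff: "sheet_sign (z1, z2) = 1 \<longleftrightarrow> z1 = z2"
proof
  assume "sheet_sign (z1, z2) = 1"
  then have "bump d (dist z1 z2) = 1"
    using bump_bounds[OF d_pos, of "dist z1 z2"] bump_bounds[OF d_pos, of "dist z1 (Phi z2)"]
    by (simp add: sheet_sign_def)
  then show "z1 = z2" using bump_eq_1_iff[OF d_pos] by simp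
next
  assume "z1 = z2"
  then show "sheet_sign (z1, z2) = 1"
    using bump_eq_1_iff[OF d_pos] bump_eq_0[OF d_pos dist_swap_ge] by (simp add: sheet_sign_def)
qed

lemma sheet_sign_eq_minus_1_iff: "sheet_sign (z1, z2) = -1 \<longleftrightarrow> z1 = Phi z2"
proof
  assume "sheet_sign (z1, z2) = -1"
  then have "bump d (dist z1 (Phi z2)) = 1"
    using bump_bounds[OF d_pos, of "dist z1 z2"] bump_bounds[OF d_pos, of "dist z1 (Phi z2)"]
    by (simp add: sheet_sign_def)
  then show "z1 = Phi z2" using bump_eq_1_iff[OF d_pos] by simp
next
  assume "z1 = Phi z2"
  then show "sheet_sign (z1, z2) = -1"
    using bump_eq_1_iff[OF d_pos] bump_eq_0[OF d_pos dist_swap_ge[of z2]]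
    by (simp add: sheet_sign_def dist_commute)
qed

lemma sheet_sign_local_lipschitz:
  assumes "dist p q < d"
  shows "dist (sheet_sign p) (sheet_sign q) \<le> 4 / d * dist p q"
proof -
  obtain z1 z2 w1 w2 where pq: "p = (z1, z2)" "q = (w1, w2)" by (cases p, cases q)
  have d1: "dist z1 w1 \<le> dist p q" using dist_fst_le[of p q] pq by simp
  have d2: "dist z2 w2 \<le> dist p q" using dist_snd_le[of p q] pq by simp
  have d2_swap: "dist (Phi z2) (Phi w2) \<le> dist p q" using dist_swap_eq[of z2 w2] d2 assms by simp
  have "dist (sheet_sign p) (sheet_sign q) \<le> \<bar>bump d (dist z1 z2) - bump d (dist w1 w2)\<bar>
          + \<bar>bump d (dist z1 (Phi z2)) - bump d (dist w1 (Phi w2))\<bar>"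
    unfolding sheet_sign_def pq dist_real_def by simp
  also have "\<dots> \<le> \<bar>dist z1 z2 - dist w1 w2\<bar> / d + \<bar>dist z1 (Phi z2) - dist w1 (Phi w2)\<bar> / d"
    by (intro add_mono bump_lipschitz[OF d_pos])
  also have "\<dots> \<le> 2 * dist p q / d + 2 * dist p q / d"
    using abs_dist_diff_le_dist_add[of z1 z2 w1 w2] abs_dist_diff_le_dist_add[of z1 "Phi z2" w1 "Phi w2"]
      d1 d2 d2_swap d_pos
    by (intro add_mono divide_right_mono) auto
  also have "\<dots> = 4 / d * dist p q" by simp
  finally show ?thesis .
qed

lemma sheet_sign_lipschitz: "\<exists>C. C-lipschitz_on UNIV sheet_sign"
proof -
  have "norm (sheet_sign p) \<le> 1" for p
    using bump_bounds[OF d_pos, of "dist (fst p) (snd p)"]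
      bump_bounds[OF d_pos, of "dist (fst p) (Phi (snd p))"]
    by (simp add: sheet_sign_def)
  then show ?thesis
    using bounded_local_lipschitz_imp_lipschitz[OF d_pos _ _ sheet_sign_local_lipschitz, of UNIV 1]
      d_pos by auto
qed

end

lemma double_covering_fibre:
  fixes Pi :: "'e::metric_space \<Rightarrow> 'n::metric_space"
  assumes "double_covering Pi"
    and swap: "\<And>z. Phi z \<noteq> z \<and> Pi (Phi z) = Pi z"
    and "Pi y = Pi z"
  shows "y = z \<or> y = Phi z"
proof -
  obtain V U1 U2 where "open V" "Pi z \<in> V" "Pi -` V = U1 \<union> U2"
    and sheets: "isometric_onto Pi U1 V" "isometric_onto Pi U2 V"
    using assms(1) unfolding double_covering_def by meson
  obtain g1 g2 where "homeomorphism U1 V Pi g1" "homeomorphism U2 V Pi g2"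
    using sheets unfolding isometric_onto_def by blast
  moreover have "y \<in> U1 \<union> U2" "z \<in> U1 \<union> U2" "Phi z \<in> U1 \<union> U2"
    using \<open>Pi z \<in> V\<close> \<open>Pi -` V = U1 \<union> U2\<close> \<open>Pi y = Pi z\<close> swap[of z] by (metis vimageI2)+
  ultimately show ?thesis
    using \<open>Pi y = Pi z\<close> swap[of z] by (metis Un_iff homeomorphism_apply1)
qed

lemma double_covering_involution:
  fixes Pi :: "'e::metric_space \<Rightarrow> 'n::metric_space"
  assumes "double_covering Pi"
    and swap: "\<And>z. Phi z \<noteq> z \<and> Pi (Phi z) = Pi z"
  shows "Phi (Phi z) = z"
  using double_covering_fibre[OF assms, of "Phi (Phi z)" z] swap[of z] swap[of "Phi z"] by metis

lemma sheet_swap_local_isometry: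
  fixes Pi :: "'e::metric_space \<Rightarrow> 'n::metric_space"
  assumes swap: "\<And>z. Phi z \<noteq> z \<and> Pi (Phi z) = Pi z"
    and "open U1" "U1 \<inter> U2 = {}" "Pi -` V = U1 \<union> U2"
    and sheet1: "isometric_onto Pi U1 V" and sheet2: "isometric_onto Pi U2 V"
    and "x \<in> U1"
  shows "\<exists>W. open W \<and> x \<in> W \<and> (\<forall>y\<in>W. Phi y \<notin> W) \<and>
           (\<forall>y\<in>W. \<forall>z\<in>W. dist (Phi y) (Phi z) = dist y z)"
proof -
  obtain g1 g2 where g1: "homeomorphism U1 V Pi g1" and g2: "homeomorphism U2 V Pi g2"
    using sheet1 sheet2 unfolding isometric_onto_def by blast
  have swap_sheet: "Phi y \<in> U2" if "y \<in> U1" for y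
  proof -
    have "Phi y \<in> U1 \<union> U2" using \<open>Pi -` V = U1 \<union> U2\<close> swap[of y] that by blast
    moreover have "Phi y \<notin> U1" using homeomorphism_apply1[OF g1] swap[of y] that by metis
    ultimately show ?thesis by blast
  qed
  have "continuous_on U1 (g2 \<circ> Pi)"
    using homeomorphism_cont1[OF g1] homeomorphism_cont2[OF g2] homeomorphism_image1[OF g1]
    by (metis continuous_on_compose)
  moreover have "(g2 \<circ> Pi) y = Phi y" if "y \<in> U1" for y
    using homeomorphism_apply1[OF g2 swap_sheet[OF that]] swap[of y] by simp
  ultimately have "continuous_on U1 Phi" by (rule continuous_on_eq)
  obtain e1 where "e1 > 0" and e1: "\<forall>y\<in>ball x e1 \<inter> U1. \<forall>z\<in>ball x e1 \<inter> U1. dist (Pi y) (Pi z) = dist y z"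
    using sheet1 \<open>x \<in> U1\<close> unfolding isometric_onto_def by blast
  obtain e2 where "e2 > 0"
    and e2: "\<forall>y\<in>ball (Phi x) e2 \<inter> U2. \<forall>z\<in>ball (Phi x) e2 \<inter> U2. dist (Pi y) (Pi z) = dist y z"
    using sheet2 swap_sheet[OF \<open>x \<in> U1\<close>] unfolding isometric_onto_def by blast
  define W where "W = Phi -` ball (Phi x) e2 \<inter> U1 \<inter> ball x e1"
  show ?thesis
  proof (intro exI conjI ballI)
    show "open W"
      unfolding W_def using \<open>open U1\<close> \<open>continuous_on U1 Phi\<close> continuous_on_open_vimage by blast
    show "x \<in> W" using \<open>x \<in> U1\<close> \<open>e1 > 0\<close> \<open>e2 > 0\<close> by (simp add: W_def)
    fix y assume "y \<in> W"
    then show "Phi y \<notin> W" using swap_sheet \<open>U1 \<inter> U2 = {}\<close> by (auto simp: W_def)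
    fix z assume "z \<in> W"
    have "dist (Phi y) (Phi z) = dist (Pi (Phi y)) (Pi (Phi z))"
      using e2 \<open>y \<in> W\<close> \<open>z \<in> W\<close> swap_sheet by (simp add: W_def)
    also have "\<dots> = dist (Pi y) (Pi z)" using swap by metis
    also have "\<dots> = dist y z" using e1 \<open>y \<in> W\<close> \<open>z \<in> W\<close> by (simp add: W_def)
    finally show "dist (Phi y) (Phi z) = dist y z" .
  qed
qed

lemma double_covering_local_swap:
  fixes Pi :: "'e::metric_space \<Rightarrow> 'n::metric_space"
  assumes "double_covering Pi"
    and swap: "\<And>z. Phi z \<noteq> z \<and> Pi (Phi z) = Pi z"
  shows "\<exists>W. open W \<and> x \<in> W \<and> (\<forall>y\<in>W. Phi y \<notin> W) \<and>
           (\<forall>y\<in>W. \<forall>z\<in>W. dist (Phi y) (Phi z) = dist y z)"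
proof -
  obtain V U1 U2 where "Pi x \<in> V" "open U1" "open U2" "U1 \<inter> U2 = {}" "Pi -` V = U1 \<union> U2"
    "isometric_onto Pi U1 V" "isometric_onto Pi U2 V"
    using assms(1) unfolding double_covering_def by meson
  moreover from this have "x \<in> U1 \<or> x \<in> U2" by blast
  ultimately show ?thesis
    using sheet_swap_local_isometry[OF swap, of U1 U2 V x] sheet_swap_local_isometry[OF swap, of U2 U1 V x]
    by (metis Int_commute Un_commute)
qed

lemma double_covering_uniform_swap:
  fixes Pi :: "'e::metric_space \<Rightarrow> 'n::metric_space"
  assumes "compact (UNIV :: 'e set)"
    and "double_covering Pi"
    and swap: "\<And>z. Phi z \<noteq> z \<and> Pi (Phi z) = Pi z"
  shows "\<exists>d. uniform_swap Phi d"
proof -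
  define \<G> where "\<G> = {W. open W \<and> (\<forall>y\<in>W. Phi y \<notin> W) \<and>
                          (\<forall>y\<in>W. \<forall>z\<in>W. dist (Phi y) (Phi z) = dist y z)}"
  have "UNIV \<subseteq> \<Union>\<G>"
  proof
    fix x :: 'e
    show "x \<in> \<Union>\<G>"
      using double_covering_local_swap[OF assms(2) swap, of x] unfolding \<G>_def by blast
  qed
  then obtain d where "d > 0" and lebesgue: "\<And>x. \<exists>W\<in>\<G>. ball x d \<subseteq> W"
    using Heine_Borel_lemma[OF assms(1)] by (metis (no_types, lifting) UNIV_I \<G>_def mem_Collect_eq)
  have "d \<le> dist z (Phi z)" for z
  proof (rule ccontr)
    assume "\<not> d \<le> dist z (Phi z)"
    moreover obtain W where "W \<in> \<G>" "ball z d \<subseteq> W" using lebesgue by blast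
    ultimately have "z \<in> W" "Phi z \<in> W" "W \<in> \<G>" using \<open>d > 0\<close> by auto
    then show False by (auto simp: \<G>_def)
  qed
  moreover have "dist (Phi y) (Phi z) = dist y z" if "dist y z < d" for y z
  proof -
    obtain W where "W \<in> \<G>" "ball z d \<subseteq> W" using lebesgue by blast
    moreover have "y \<in> ball z d" "z \<in> ball z d" using that \<open>d > 0\<close> by (auto simp: dist_commute)
    ultimately have "y \<in> W" "z \<in> W" "W \<in> \<G>" by auto
    then show ?thesis by (simp add: \<G>_def)
  qed
  ultimately have "uniform_swap Phi d"
    using \<open>d > 0\<close> double_covering_involution[OF assms(2) swap] by unfold_locales auto
  then show ?thesis ..
qed

theorem lemma1p1:
  fixes Pi :: "'e::metric_space \<Rightarrow> 'n::metric_space"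
    and Phi :: "'e \<Rightarrow> 'e"
  assumes "compact (UNIV :: 'e set)"
    and "compact (UNIV :: 'n set)"
    and "double_covering Pi"
    and "\<And>z. Phi z \<noteq> z \<and> Pi (Phi z) = Pi z"
  shows "\<exists>Xi :: 'e \<times> 'e \<Rightarrow> real. (\<exists>C. C-lipschitz_on UNIV Xi) \<and>
           (\<forall>z1 z2. (Xi (z1, z2) = 1 \<longleftrightarrow> z1 = z2) \<and>
                    (Xi (z1, z2) = -1 \<longleftrightarrow> z1 = Phi z2) \<and>
                    Xi (z1, z2) = Xi (Phi z1, Phi z2))"
proof -
  obtain d where "uniform_swap Phi d"
    using double_covering_uniform_swap[OF assms(1,3,4)] by blast
  then interpret uniform_swap Phi d .
  show ?thesis
    using sheet_sign_lipschitz sheet_sign_eq_1_iff sheet_sign_eq_minus_1_iff sheet_sign_swap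
    by metis
qed

end
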